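(* Let $n\ge3$, $x^\Lambda\partial_k\in\mathcal{B}$ and $i\ge-1$. If $\mathrm{lev}_i(x^\Lambda\partial_k)\le i$, then there exists an integer $j$ with $-1\le j\le i$ such that $\mathrm{lev}_j(x^\Lambda\partial_k)=j$.
   Context: Fix an integer $n\ge 3$. A partition is a sequence $\Lambda=(\lambda_j)_{j\ge1}$ of non-negative integers with finite support; $\mathrm{wt}(\Lambda)=\sum_j j\lambda_j$; $\mathrm{Part}(k)$ is the set of partitions with $\lambda_j=0$ for $j>k$. Write $x^\Lambda=\prod_j x_j^{\lambda_j}$, $\deg(x^\Lambda)=\sum_j\lambda_j$. $\mathcal{B}=\{x^\Lambda\partial_k : 1\le k\le n,\ \Lambda\in\mathrm{Part}(k-1)\}$. For an integer $i\ge-1$, let $r_i\in\{1,\dots,n-1\}$ with $i\equiv r_i\pmod{n-1}$ and $h_i=\lfloor (i-1)/(n-1)\rfloor+1$. Define $\mathrm{WD}(x^\Lambda\partial_k)=\mathrm{wt}(\Lambda)-\deg(x^\Lambda)+n-k$ and $\mathrm{lev}_i(x^\Lambda\partial_k)=h_i\,\mathrm{WD}(x^\Lambda\partial_k)+\deg(x^\Lambda)-1$. *)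

theory Defs
  imports Main
begin

text \<open>A partition is a finitely supported sequence of naturals indexed by j >= 1;
  we model it as a function nat => nat and ignore index 0 (forced to be 0 in Part).\<close>

definition Part :: "nat \<Rightarrow> (nat \<Rightarrow> nat) set" where
  "Part k = {\<Lambda>. \<forall>j. (j = 0 \<or> j > k) \<longrightarrow> \<Lambda> j = 0}"

definition supp_part :: "(nat \<Rightarrow> nat) \<Rightarrow> nat set" where
  "supp_part \<Lambda> = {j. 0 < j \<and> \<Lambda> j \<noteq> 0}"

definition is_partition :: "(nat \<Rightarrow> nat) \<Rightarrow> bool" where
  "is_partition \<Lambda> \<longleftrightarrow> finite (supp_part \<Lambda>) \<and> \<Lambda> 0 = 0"

definition wt :: "(nat \<Rightarrow> nat) \<Rightarrow> nat" where
  "wt \<Lambda> = (\<Sum>j\<in>supp_part \<Lambda>. j * \<Lambda> j)"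

definition mdeg :: "(nat \<Rightarrow> nat) \<Rightarrow> nat" where
  "mdeg \<Lambda> = (\<Sum>j\<in>supp_part \<Lambda>. \<Lambda> j)"

definition in_B :: "nat \<Rightarrow> (nat \<Rightarrow> nat) \<Rightarrow> nat \<Rightarrow> bool" where
  "in_B n \<Lambda> k \<longleftrightarrow> 1 \<le> k \<and> k \<le> n \<and> \<Lambda> \<in> Part (k - 1)"

definition hh :: "nat \<Rightarrow> int \<Rightarrow> int" where
  "hh n i = (i - 1) div (int n - 1) + 1"

definition WD :: "nat \<Rightarrow> (nat \<Rightarrow> nat) \<Rightarrow> nat \<Rightarrow> int" where
  "WD n \<Lambda> k = int (wt \<Lambda>) - int (mdeg \<Lambda>) + int n - int k"

definition lev :: "nat \<Rightarrow> int \<Rightarrow> (nat \<Rightarrow> nat) \<Rightarrow> nat \<Rightarrow> int" where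
  "lev n i \<Lambda> k = hh n i * WD n \<Lambda> k + int (mdeg \<Lambda>) - 1"

end

theory Submission
  imports Defs
begin

text \<open>The function \<open>f j = lev\<^sub>j - j\<close> is nonnegative at \<open>j = -1\<close> (where \<open>h\<^sub>-\<^sub>1 = 0\<close>) and
  nonpositive at \<open>j = i\<close>; since \<open>h\<^sub>j\<close> is monotone and \<open>WD \<ge> 0\<close>, \<open>lev\<^sub>j\<close> is monotone in \<open>j\<close>,
  so \<open>f\<close> decreases by at most one per step and must hit zero on the way down.\<close>

lemma int_down_crossing_zero:
  fixes f :: "int \<Rightarrow> int"
  assumes "a \<le> b" and "0 \<le> f a" and "f b \<le> 0"
    and step: "\<And>j. a \<le> j \<Longrightarrow> j < b \<Longrightarrow> f j - 1 \<le> f (j + 1)"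
  shows "\<exists>j. a \<le> j \<and> j \<le> b \<and> f j = 0"
  using \<open>a \<le> b\<close> step \<open>f b \<le> 0\<close>
proof (induction b rule: int_ge_induct)
  case base
  then show ?case using \<open>0 \<le> f a\<close> by auto
next
  case (step b)
  show ?case
  proof (cases "f b \<le> 0")
    case True
    then show ?thesis using step by force
  next
    case False
    then have "f (b + 1) = 0" using step.prems step.hyps by force
    then show ?thesis using step.hyps by (intro exI[of _ "b + 1"]) auto
  qed
qed

lemma mdeg_le_wt: "mdeg \<Lambda> \<le> wt \<Lambda>"
  unfolding mdeg_def wt_def by (rule sum_mono) (auto simp: supp_part_def)

lemma WD_nonneg:
  assumes "k \<le> n"
  shows "0 \<le> WD n \<Lambda> k"
  using mdeg_le_wt[of \<Lambda>] assms by (simp add: WD_def)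

lemma hh_mono:
  assumes "1 \<le> n" and "i \<le> i'"
  shows "hh n i \<le> hh n i'"
  using assms by (cases "n = 1") (auto simp: hh_def intro: zdiv_mono1)

lemma lev_mono:
  assumes "1 \<le> n" and "k \<le> n" and "i \<le> i'"
  shows "lev n i \<Lambda> k \<le> lev n i' \<Lambda> k"
  using mult_right_mono[OF hh_mono[OF assms(1,3)] WD_nonneg[OF assms(2), of \<Lambda>]]
  by (simp add: lev_def)

lemma hh_minus_one:
  assumes "3 \<le> n"
  shows "hh n (-1) = 0"
proof -
  have "(-2) div (int n - 1) = -1"
    using assms by (intro int_div_pos_eq[of _ _ _ "int n - 3"]) auto
  then show ?thesis by (simp add: hh_def)
qed

lemma lev_minus_one:
  assumes "3 \<le> n"
  shows "lev n (-1) \<Lambda> k = int (mdeg \<Lambda>) - 1"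
  using hh_minus_one[OF assms] by (simp add: lev_def)

theorem lemma2p5:
  fixes n k :: nat and \<Lambda> :: "nat \<Rightarrow> nat" and i :: int
  assumes "n \<ge> 3" and "in_B n \<Lambda> k" and "i \<ge> -1"
    and "lev n i \<Lambda> k \<le> i"
  shows "\<exists>j::int. -1 \<le> j \<and> j \<le> i \<and> lev n j \<Lambda> k = j"
proof -
  define f where "f j = lev n j \<Lambda> k - j" for j
  have "k \<le> n" using assms(2) by (simp add: in_B_def)
  have "f j - 1 \<le> f (j + 1)" for j
    using lev_mono[of n k j "j + 1" \<Lambda>] \<open>n \<ge> 3\<close> \<open>k \<le> n\<close> by (simp add: f_def)
  moreover have "0 \<le> f (-1)"
    using lev_minus_one[OF \<open>n \<ge> 3\<close>] by (simp add: f_def)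
  moreover have "f i \<le> 0" using assms(4) by (simp add: f_def)
  ultimately obtain j where "-1 \<le> j" "j \<le> i" "f j = 0"
    using int_down_crossing_zero[of "-1" i f] \<open>i \<ge> -1\<close> by blast
  then show ?thesis by (auto simp: f_def)
qed

end
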